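(* Let $G$ be a finite simple $d$-regular graph on $n\ge 3$ vertices that contains at least one Hamiltonian cycle. Choose edges of $G$ one at a time in a uniformly random order (without repetition), stopping as soon as every vertex has degree at least two; call the resulting random graph $G_\omega$. Then $$\mathbb{E}\left(\frac{\#\{\text{Hamiltonian cycles of } G \text{ contained in } G_\omega\}}{\#\{\text{Hamiltonian cycles of } G\}}\right) = \frac{2}{\binom{n+d-2}{n}} - \frac{1}{\binom{n+2d-4}{n}}.$$
   Context: Precisely: a uniformly random ordering $(e_1,\dots,e_m)$ of the $m$ edges of $G$ is chosen, $k$ is the least index such that the graph on $V(G)$ with edges $e_1,\dots,e_k$ has minimum degree at least $2$, and $G_\omega$ is that graph. Hamiltonian cycles are counted as subgraphs (edge sets). *)

theory Defs
  imports "HOL-Probability.Probability" "HOL-Combinatorics.Multiset_Permutations"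
begin

definition simple_graph :: "'a set \<Rightarrow> 'a set set \<Rightarrow> bool" where
  "simple_graph V E \<longleftrightarrow> finite V \<and> (\<forall>e\<in>E. \<exists>u v. u \<noteq> v \<and> u \<in> V \<and> v \<in> V \<and> e = {u, v})"

definition degree :: "'a set set \<Rightarrow> 'a \<Rightarrow> nat" where
  "degree E v = card {e \<in> E. v \<in> e}"

definition regular :: "'a set \<Rightarrow> 'a set set \<Rightarrow> nat \<Rightarrow> bool" where
  "regular V E d \<longleftrightarrow> (\<forall>v\<in>V. degree E v = d)"

definition ham_cycles :: "'a set \<Rightarrow> 'a set set \<Rightarrow> 'a set set set" where
  "ham_cycles V E = {H. H \<subseteq> E \<and> (\<exists>vs. distinct vs \<and> set vs = V \<and> length vs \<ge> 3 \<and>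
      H = {{vs ! i, vs ! ((i + 1) mod length vs)} | i. i < length vs})}"

definition stop_index :: "'a set \<Rightarrow> 'a set list \<Rightarrow> nat" where
  "stop_index V xs = (LEAST k. \<forall>v\<in>V. degree (set (take k xs)) v \<ge> 2)"

definition G_omega :: "'a set \<Rightarrow> 'a set list \<Rightarrow> 'a set set" where
  "G_omega V xs = set (take (stop_index V xs) xs)"

end

theory Submission
  imports Defs
begin

(* Fix a 2-factor H of G (every Hamiltonian cycle is one; it has n edges) and let e be the edge
   of H that comes last in the ordering. Since G_omega is a prefix of the ordering, H lies in
   G_omega iff the process has not stopped before e is drawn. At that moment all edges of H
   except e are present, so every vertex outside e already has degree 2, and an endpoint u of e
   has degree below 2 iff none of the d - 2 edges of G - H at u precedes e.
   In a uniform ordering, e is last among the n edges of H and precedes r other given edges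
   with probability (n - 1)! r! / (n + r)!. Inclusion-exclusion over the two endpoints of e,
   whose sets of edges outside H are disjoint, and summation over the n choices of e give
   n (2 (n-1)! (d-2)! / (n+d-2)! - (n-1)! (2d-4)! / (n+2d-4)!), which is the claimed value for
   every Hamiltonian cycle; linearity of expectation finishes the proof. *)

definition elems_before :: "'b \<Rightarrow> 'b list \<Rightarrow> 'b set" where
  "elems_before e xs = set (takeWhile (\<lambda>x. x \<noteq> e) xs)"

lemma elems_before_append_Cons: "e \<notin> set as \<Longrightarrow> elems_before e (as @ e # bs) = set as"
  by (induction as) (auto simp: elems_before_def)

lemma not_in_elems_before: "e \<notin> elems_before e xs"
  unfolding elems_before_def by (auto dest: set_takeWhileD)

lemma elems_before_subset: "elems_before e xs \<subseteq> set xs"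
  unfolding elems_before_def by (auto dest: set_takeWhileD)

lemma elems_before_filter: "P e \<Longrightarrow> elems_before e (filter P xs) = {x \<in> elems_before e xs. P x}"
  by (induction xs) (auto simp: elems_before_def)

lemma elems_before_asym: "e' \<in> elems_before e xs \<Longrightarrow> e \<notin> elems_before e' xs"
  by (induction xs) (auto simp: elems_before_def)

lemma elems_before_subset_take:
  assumes "e \<in> set (take k xs)"
  shows "elems_before e xs \<subseteq> set (take k xs)"
proof -
  have "takeWhile (\<lambda>x. x \<noteq> e) xs = takeWhile (\<lambda>x. x \<noteq> e) (take k xs)"
    using assms takeWhile_append1[of e "take k xs" "\<lambda>x. x \<noteq> e" "drop k xs"] by simp
  then show ?thesis
    unfolding elems_before_def by (auto dest: set_takeWhileD)
qed

lemma ex_last_occurring: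
  assumes "H \<subseteq> set xs" "H \<noteq> {}"
  shows "\<exists>e\<in>H. H - {e} \<subseteq> elems_before e xs"
  using assms
proof (induction xs rule: rev_induct)
  case Nil
  then show ?case by simp
next
  case (snoc x xs)
  show ?case
  proof (cases "H \<subseteq> set xs")
    case True
    then obtain e where "e \<in> H" "H - {e} \<subseteq> elems_before e xs"
      using snoc by blast
    moreover have "elems_before e xs \<subseteq> elems_before e (xs @ [x])"
      unfolding elems_before_def by (induction xs) auto
    ultimately show ?thesis by blast
  next
    case False
    then have "x \<in> H" "x \<notin> set xs" "H - {x} \<subseteq> set xs"
      using snoc.prems by auto
    then show ?thesis
      using elems_before_append_Cons[of x xs "[]"] by auto
  qed
qed

lemma map_pmf_filter_random_permutation:
  assumes "finite A"
  shows "map_pmf (filter P) (pmf_of_set (permutations_of_set A)) =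
         pmf_of_set (permutations_of_set {x \<in> A. P x})"
proof -
  have "filter P = fst \<circ> partition P" by (auto simp: fun_eq_iff)
  then show ?thesis
    by (simp add: pmf.map_comp[symmetric] partition_random_permutations[OF assms] map_fst_pair_pmf)
qed

lemma permutations_last_of_before_all_eq_image:
  assumes "e \<in> T" "T \<inter> R = {}"
  shows "{xs \<in> permutations_of_set (T \<union> R). T - {e} \<subseteq> elems_before e xs \<and> R \<inter> elems_before e xs = {}}
         = (\<lambda>(as, bs). as @ e # bs) ` (permutations_of_set (T - {e}) \<times> permutations_of_set R)"
proof (intro set_eqI iffI)
  fix xs
  assume xs: "xs \<in> {xs \<in> permutations_of_set (T \<union> R).
                       T - {e} \<subseteq> elems_before e xs \<and> R \<inter> elems_before e xs = {}}"
  then have "e \<in> set xs"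
    using assms by (auto simp: permutations_of_set_def)
  then obtain as bs where xs_eq: "xs = as @ e # bs"
    by (meson split_list)
  with xs have "distinct xs" "e \<notin> set as" "set as \<inter> set bs = {}" "e \<notin> set bs"
    by (auto simp: permutations_of_set_def)
  with xs xs_eq assms have "set as = T - {e}" "set bs = R"
    by (auto simp: permutations_of_set_def elems_before_append_Cons)
  with \<open>distinct xs\<close> xs_eq show "xs \<in> (\<lambda>(as, bs). as @ e # bs) `
                (permutations_of_set (T - {e}) \<times> permutations_of_set R)"
    by (auto simp: permutations_of_set_def)
next
  fix xs
  assume "xs \<in> (\<lambda>(as, bs). as @ e # bs) ` (permutations_of_set (T - {e}) \<times> permutations_of_set R)"
  then obtain as bs where "xs = as @ e # bs" "set as = T - {e}" "distinct as" "set bs = R" "distinct bs"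
    by (auto simp: permutations_of_set_def)
  with assms show "xs \<in> {xs \<in> permutations_of_set (T \<union> R).
                             T - {e} \<subseteq> elems_before e xs \<and> R \<inter> elems_before e xs = {}}"
    by (auto simp: permutations_of_set_def elems_before_append_Cons)
qed

lemma card_permutations_last_of_before_all:
  assumes "finite T" "finite R" "e \<in> T" "T \<inter> R = {}"
  shows "card {xs \<in> permutations_of_set (T \<union> R).
                 T - {e} \<subseteq> elems_before e xs \<and> R \<inter> elems_before e xs = {}}
         = fact (card T - 1) * fact (card R)"
proof -
  have "inj_on (\<lambda>(as, bs). as @ e # bs) (permutations_of_set (T - {e}) \<times> permutations_of_set R)"
    by (auto simp: inj_on_def length_finite_permutations_of_set)
  with assms show ?thesis
    by (simp add: permutations_last_of_before_all_eq_image card_image card_cartesian_product card_Diff_singleton)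
qed

lemma prob_last_of_before_all:
  assumes "finite A" "T \<subseteq> A" "R \<subseteq> A" "T \<inter> R = {}" "e \<in> T"
  shows "measure_pmf.prob (pmf_of_set (permutations_of_set A))
           {xs. T - {e} \<subseteq> elems_before e xs \<and> R \<inter> elems_before e xs = {}}
         = fact (card T - 1) * fact (card R) / fact (card T + card R)"
proof -
  define S where "S = T \<union> R"
  define event where "event = {xs. T - {e} \<subseteq> elems_before e xs \<and> R \<inter> elems_before e xs = {}}"
  have "finite T" "finite R"
    using assms finite_subset by blast+
  have "S \<subseteq> A" "e \<in> S"
    using assms by (auto simp: S_def)
  then have "event = filter (\<lambda>x. x \<in> S) -` event"
    by (auto simp: event_def elems_before_filter S_def)
  then have "measure_pmf.prob (pmf_of_set (permutations_of_set A)) event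
             = measure_pmf.prob (map_pmf (filter (\<lambda>x. x \<in> S)) (pmf_of_set (permutations_of_set A))) event"
    by simp
  also have "\<dots> = measure_pmf.prob (pmf_of_set (permutations_of_set S)) event"
    using \<open>S \<subseteq> A\<close> by (simp add: map_pmf_filter_random_permutation[OF assms(1)] Collect_conj_eq Int_absorb1)
  also have "\<dots> = fact (card T - 1) * fact (card R) / fact (card S)"
    using card_permutations_last_of_before_all[OF \<open>finite T\<close> \<open>finite R\<close> assms(5,4)] \<open>finite T\<close> \<open>finite R\<close>
    by (simp add: measure_pmf_of_set S_def event_def Int_def)
  finally show ?thesis
    using \<open>finite T\<close> \<open>finite R\<close> assms(4) by (simp add: event_def S_def card_Un_disjoint)
qed

lemma simple_graph_finite_edges:
  assumes "simple_graph V E"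
  shows "finite E"
proof -
  have "E \<subseteq> Pow V"
    using assms unfolding simple_graph_def by fastforce
  moreover have "finite V"
    using assms unfolding simple_graph_def by simp
  ultimately show ?thesis
    by (meson finite_Pow_iff finite_subset)
qed

lemma simple_graph_edgeE:
  assumes "simple_graph V E" "f \<in> E"
  obtains u v where "u \<noteq> v" "u \<in> V" "v \<in> V" "f = {u, v}"
  using assms unfolding simple_graph_def by meson

lemma edges_at_both_endpoints:
  assumes "simple_graph V E" "u \<noteq> v"
  shows "{f \<in> E. u \<in> f} \<inter> {f \<in> E. v \<in> f} \<subseteq> {{u, v}}"
proof
  fix f assume "f \<in> {f \<in> E. u \<in> f} \<inter> {f \<in> E. v \<in> f}"
  moreover from this obtain x y where "f = {x, y}"
    using simple_graph_edgeE[OF assms(1)] by blast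
  ultimately show "f \<in> {{u, v}}"
    using assms(2) by auto
qed

lemma degree_mono: "finite B \<Longrightarrow> A \<subseteq> B \<Longrightarrow> degree A v \<le> degree B v"
  unfolding degree_def by (rule card_mono) auto

lemma degree_Un_disjoint:
  assumes "finite A" "finite B" "A \<inter> B = {}"
  shows "degree (A \<union> B) v = degree A v + degree B v"
proof -
  have "{f \<in> A \<union> B. v \<in> f} = {f \<in> A. v \<in> f} \<union> {f \<in> B. v \<in> f}"
    by blast
  with assms show ?thesis
    unfolding degree_def by (simp add: card_Un_disjoint disjoint_iff)
qed

lemma degree_Diff_singleton:
  assumes "finite A" "e \<in> A"
  shows "degree (A - {e}) v = degree A v - (if v \<in> e then 1 else 0)"
proof -
  have "{f \<in> A - {e}. v \<in> f} = {f \<in> A. v \<in> f} - {e}"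
    by blast
  then show ?thesis
    using assms unfolding degree_def by (cases "v \<in> e") (simp_all add: card_Diff_singleton)
qed

lemma degree_pos_iff: "finite A \<Longrightarrow> 0 < degree A v \<longleftrightarrow> (\<exists>f\<in>A. v \<in> f)"
  unfolding degree_def by (auto simp: card_gt_0_iff)

lemma sum_degree_eq_twice_card:
  assumes "simple_graph V E" "H \<subseteq> E"
  shows "(\<Sum>v\<in>V. degree H v) = 2 * card H"
proof -
  have "finite V" "finite H"
    using assms simple_graph_finite_edges[OF assms(1)] finite_subset by (auto simp: simple_graph_def)
  have "(\<Sum>v\<in>V. degree H v) = (\<Sum>v\<in>V. \<Sum>f\<in>H. if v \<in> f then 1 else 0)"
    using \<open>finite H\<close> by (simp add: degree_def sum.If_cases Int_def)
  also have "\<dots> = (\<Sum>f\<in>H. \<Sum>v\<in>V. if v \<in> f then 1 else 0)"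
    by (rule sum.swap)
  also have "\<dots> = (\<Sum>f\<in>H. 2)"
  proof (rule sum.cong)
    fix f assume "f \<in> H"
    then obtain u w where "u \<noteq> w" "u \<in> V" "w \<in> V" "f = {u, w}"
      using assms simple_graph_edgeE by blast
    then have "V \<inter> {v. v \<in> f} = {u, w}"
      by auto
    then show "(\<Sum>v\<in>V. if v \<in> f then 1 else 0) = (2::nat)"
      using \<open>finite V\<close> \<open>u \<noteq> w\<close> by (simp add: sum.If_cases)
  qed simp
  finally show ?thesis by simp
qed

definition two_factor :: "'a set \<Rightarrow> 'a set set \<Rightarrow> 'a set set \<Rightarrow> bool" where
  "two_factor V E H \<longleftrightarrow> H \<subseteq> E \<and> (\<forall>v\<in>V. degree H v = 2)"

lemma card_two_factor:
  assumes "simple_graph V E" "two_factor V E H"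
  shows "card H = card V"
  using sum_degree_eq_twice_card[of V E H] assms unfolding two_factor_def by simp

lemma Suc_mod_eq_iff:
  assumes "k < n" "i < n"
  shows "Suc k mod n = i \<longleftrightarrow> k = (if i = 0 then n - 1 else i - 1)"
proof -
  have "Suc k mod n = (if Suc k = n then 0 else Suc k)"
    using assms by simp
  then show ?thesis
    using assms by auto
qed

lemma ham_cycle_two_factor:
  assumes "H \<in> ham_cycles V E"
  shows "two_factor V E H"
proof -
  obtain vs where vs: "H \<subseteq> E" "distinct vs" "set vs = V" "length vs \<ge> 3"
    "H = {{vs ! i, vs ! ((i + 1) mod length vs)} | i. i < length vs}"
    using assms unfolding ham_cycles_def by blast
  define n where "n = length vs"
  define edge where "edge i = {vs ! i, vs ! (Suc i mod n)}" for i
  have H: "H = edge ` {..<n}"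
    using vs(5) unfolding edge_def n_def by auto
  have nth_eq: "vs ! j = vs ! k \<longleftrightarrow> j = k" if "j < n" "k < n" for j k
    using that vs(2) nth_eq_iff_index_eq n_def by metis
  have "degree H w = 2" if "w \<in> V" for w
  proof -
    obtain i where i: "i < n" "w = vs ! i"
      using \<open>w \<in> V\<close> vs(3) n_def by (metis in_set_conv_nth)
    define p where "p = (if i = 0 then n - 1 else i - 1)"
    have "p < n" "Suc i mod n < n" "Suc i mod n \<noteq> p" "Suc i mod n \<noteq> i"
      using i(1) vs(4) by (auto simp: p_def n_def mod_Suc)
    have "w \<in> edge k \<longleftrightarrow> k = i \<or> k = p" if "k < n" for k
      using that i nth_eq[of i k] nth_eq[of i "Suc k mod n"] Suc_mod_eq_iff[of k n i]
      by (auto simp: edge_def p_def)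
    then have "{f \<in> H. w \<in> f} = {edge i, edge p}"
      using H i(1) \<open>p < n\<close> by auto
    moreover have "vs ! (Suc i mod n) \<notin> edge p"
      using nth_eq \<open>Suc i mod n < n\<close> \<open>p < n\<close> i \<open>Suc i mod n \<noteq> p\<close> \<open>Suc i mod n \<noteq> i\<close>
        Suc_mod_eq_iff[of p n i]
      by (auto simp: edge_def p_def)
    then have "edge i \<noteq> edge p"
      by (auto simp: edge_def)
    ultimately show ?thesis
      by (simp add: degree_def)
  qed
  with vs(1) show ?thesis
    by (simp add: two_factor_def)
qed

lemma stop_index_le_iff:
  assumes "\<forall>v\<in>V. 2 \<le> degree (set xs) v"
  shows "stop_index V xs \<le> k \<longleftrightarrow> (\<forall>v\<in>V. 2 \<le> degree (set (take k xs)) v)"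
proof
  assume "stop_index V xs \<le> k"
  moreover have "\<forall>v\<in>V. 2 \<le> degree (set (take (stop_index V xs) xs)) v"
    unfolding stop_index_def by (rule LeastI[of _ "length xs"]) (simp add: assms)
  ultimately show "\<forall>v\<in>V. 2 \<le> degree (set (take k xs)) v"
    by (meson degree_mono List.finite_set order_trans set_take_subset_set_take)
next
  assume "\<forall>v\<in>V. 2 \<le> degree (set (take k xs)) v"
  then show "stop_index V xs \<le> k"
    unfolding stop_index_def by (rule Least_le)
qed

lemma mem_G_omega_iff:
  assumes "e \<in> set xs" "\<forall>v\<in>V. 2 \<le> degree (set xs) v"
  shows "e \<in> G_omega V xs \<longleftrightarrow> \<not> (\<forall>v\<in>V. 2 \<le> degree (elems_before e xs) v)"
proof -
  obtain as bs where xs: "xs = as @ e # bs" "e \<notin> set as"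
    using split_list_first[OF assms(1)] by blast
  have "e \<in> set (take k xs) \<longleftrightarrow> \<not> k \<le> length as" for k
    using xs by (auto simp: take_append take_Cons' dest: in_set_takeD)
  moreover have "elems_before e xs = set (take (length as) xs)"
    using xs by (simp add: elems_before_append_Cons)
  ultimately show ?thesis
    unfolding G_omega_def using stop_index_le_iff[OF assms(2)] by simp
qed

lemma subset_G_omega_iff_mem_last:
  assumes "e \<in> H" "H - {e} \<subseteq> elems_before e xs"
  shows "H \<subseteq> G_omega V xs \<longleftrightarrow> e \<in> G_omega V xs"
proof
  assume "e \<in> G_omega V xs"
  then have "elems_before e xs \<subseteq> G_omega V xs"
    unfolding G_omega_def by (rule elems_before_subset_take)
  with assms(2) \<open>e \<in> G_omega V xs\<close> show "H \<subseteq> G_omega V xs"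
    by blast
qed (use assms(1) in blast)

lemma min_degree_before_last_iff:
  assumes "simple_graph V E" "two_factor V E H" "e \<in> H"
    and "H - {e} \<subseteq> F" "e \<notin> F" "F \<subseteq> E"
  shows "(\<forall>v\<in>V. 2 \<le> degree F v) \<longleftrightarrow> (\<forall>u\<in>e. {f \<in> E - H. u \<in> f} \<inter> F \<noteq> {})"
proof -
  have "finite E"
    using assms(1) by (rule simple_graph_finite_edges)
  have "H \<subseteq> E" "e \<subseteq> V"
    using assms(1-3) unfolding two_factor_def simple_graph_def by auto
  have "finite H" "finite (F - H)"
    using \<open>finite E\<close> \<open>H \<subseteq> E\<close> assms(6) finite_subset by blast+
  have "F = (H - {e}) \<union> (F - H)"
    using assms(4-5) by blast
  moreover have "degree ((H - {e}) \<union> (F - H)) v = degree (H - {e}) v + degree (F - H) v" for v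
    using \<open>finite H\<close> \<open>finite (F - H)\<close> by (intro degree_Un_disjoint) auto
  ultimately have "degree F v = degree (H - {e}) v + degree (F - H) v" for v
    by simp
  then have "degree F v = degree H v - (if v \<in> e then 1 else 0) + degree (F - H) v" for v
    using \<open>finite H\<close> assms(3) by (simp add: degree_Diff_singleton)
  moreover have "0 < degree (F - H) v \<longleftrightarrow> {f \<in> E - H. v \<in> f} \<inter> F \<noteq> {}" for v
    using degree_pos_iff[OF \<open>finite (F - H)\<close>, of v] assms(6) by auto
  moreover have "degree H v = 2" if "v \<in> V" for v
    using that assms(2) unfolding two_factor_def by blast
  ultimately have "2 \<le> degree F v \<longleftrightarrow> v \<notin> e \<or> {f \<in> E - H. v \<in> f} \<inter> F \<noteq> {}" if "v \<in> V" for v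
    using that by (cases "v \<in> e") (simp_all add: Suc_le_eq)
  then show ?thesis
    using \<open>e \<subseteq> V\<close> by (auto simp del: Int_Collect)
qed

lemma subset_G_omega_iff_endpoint_unsaturated:
  assumes "simple_graph V E" "two_factor V E H" "xs \<in> permutations_of_set E"
    and "e \<in> H" "H - {e} \<subseteq> elems_before e xs"
  shows "H \<subseteq> G_omega V xs \<longleftrightarrow> (\<exists>u\<in>e. {f \<in> E - H. u \<in> f} \<inter> elems_before e xs = {})"
proof -
  have "set xs = E" "H \<subseteq> E"
    using assms(2,3) by (auto simp: permutations_of_set_def two_factor_def)
  have "\<forall>v\<in>V. 2 \<le> degree (set xs) v"
    using assms(2) \<open>set xs = E\<close> degree_mono[OF simple_graph_finite_edges[OF assms(1)] \<open>H \<subseteq> E\<close>]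
    by (metis two_factor_def)
  have "e \<in> set xs"
    using assms(4) \<open>H \<subseteq> E\<close> \<open>set xs = E\<close> by blast
  have "H \<subseteq> G_omega V xs \<longleftrightarrow> e \<in> G_omega V xs"
    using assms(4,5) by (rule subset_G_omega_iff_mem_last)
  also have "\<dots> \<longleftrightarrow> \<not> (\<forall>v\<in>V. 2 \<le> degree (elems_before e xs) v)"
    using \<open>e \<in> set xs\<close> \<open>\<forall>v\<in>V. 2 \<le> degree (set xs) v\<close> by (rule mem_G_omega_iff)
  also have "\<dots> \<longleftrightarrow> (\<exists>u\<in>e. {f \<in> E - H. u \<in> f} \<inter> elems_before e xs = {})"
    using min_degree_before_last_iff[OF assms(1,2,4,5) not_in_elems_before]
      elems_before_subset[of e xs] \<open>set xs = E\<close> by simp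
  finally show ?thesis .
qed

lemma subset_G_omega_iff_ex_last:
  assumes "simple_graph V E" "two_factor V E H" "xs \<in> permutations_of_set E" "H \<noteq> {}"
  shows "H \<subseteq> G_omega V xs \<longleftrightarrow>
           (\<exists>e\<in>H. H - {e} \<subseteq> elems_before e xs \<and> (\<exists>u\<in>e. {f \<in> E - H. u \<in> f} \<inter> elems_before e xs = {}))"
    (is "_ \<longleftrightarrow> (\<exists>e\<in>H. ?last e \<and> ?unsaturated e)")
proof
  assume "H \<subseteq> G_omega V xs"
  have "H \<subseteq> set xs"
    using assms(2,3) by (auto simp: permutations_of_set_def two_factor_def)
  then obtain e where "e \<in> H" "?last e"
    using ex_last_occurring assms(4) by blast
  moreover from this have "?unsaturated e"
    using subset_G_omega_iff_endpoint_unsaturated[OF assms(1-3)] \<open>H \<subseteq> G_omega V xs\<close> by simp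
  ultimately show "\<exists>e\<in>H. ?last e \<and> ?unsaturated e"
    by blast
next
  assume "\<exists>e\<in>H. ?last e \<and> ?unsaturated e"
  then obtain e where "e \<in> H" "?last e" "?unsaturated e"
    by blast
  then show "H \<subseteq> G_omega V xs"
    using subset_G_omega_iff_endpoint_unsaturated[OF assms(1-3)] by simp
qed

lemma disjoint_family_on_last_occurring:
  "disjoint_family_on (\<lambda>e. {xs. H - {e} \<subseteq> elems_before e xs \<and> P e xs}) H"
  unfolding disjoint_family_on_def
proof (intro ballI impI, rule ccontr)
  fix e e' assume "e \<in> H" "e' \<in> H" "e \<noteq> e'"
    and "{xs. H - {e} \<subseteq> elems_before e xs \<and> P e xs} \<inter> {xs. H - {e'} \<subseteq> elems_before e' xs \<and> P e' xs} \<noteq> {}"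
  then obtain xs where "e' \<in> elems_before e xs" "e \<in> elems_before e' xs"
    by blast
  with elems_before_asym show False
    by metis
qed

lemma regular_degree_ge_2_if_two_factor:
  assumes "simple_graph V E" "regular V E d" "two_factor V E H" "V \<noteq> {}"
  shows "2 \<le> d"
proof -
  obtain v where "v \<in> V"
    using assms(4) by blast
  moreover have "H \<subseteq> E"
    using assms(3) by (simp add: two_factor_def)
  ultimately show ?thesis
    using assms(2,3) degree_mono[OF simple_graph_finite_edges[OF assms(1)]]
    unfolding regular_def two_factor_def by metis
qed

lemma card_non_factor_edges_at:
  assumes "simple_graph V E" "regular V E d" "two_factor V E H" "v \<in> V"
  shows "card {f \<in> E - H. v \<in> f} = d - 2"
proof -
  have "finite E" "H \<subseteq> E"
    using assms(1,3) simple_graph_finite_edges unfolding two_factor_def by blast+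
  moreover have "E = H \<union> (E - H)"
    using \<open>H \<subseteq> E\<close> by blast
  ultimately have "degree E v = degree H v + degree (E - H) v"
    using degree_Un_disjoint[of H "E - H" v] finite_subset by auto
  with assms(2-4) show ?thesis
    unfolding regular_def two_factor_def by (simp add: degree_def)
qed

lemma prob_last_edge_with_unsaturated_endpoint:
  assumes "simple_graph V E" "regular V E d" "two_factor V E H" "e \<in> H"
  shows "measure_pmf.prob (pmf_of_set (permutations_of_set E))
           {xs. H - {e} \<subseteq> elems_before e xs \<and> (\<exists>u\<in>e. {f \<in> E - H. u \<in> f} \<inter> elems_before e xs = {})}
         = 2 * (fact (card V - 1) * fact (d - 2) / fact (card V + (d - 2)))
           - fact (card V - 1) * fact (2 * (d - 2)) / fact (card V + 2 * (d - 2))"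
proof -
  let ?p = "pmf_of_set (permutations_of_set E)"
  define N where "N u = {f \<in> E - H. u \<in> f}" for u
  define event where "event R = {xs. H - {e} \<subseteq> elems_before e xs \<and> R \<inter> elems_before e xs = {}}" for R
  have "finite E" "H \<subseteq> E"
    using assms(1,3) simple_graph_finite_edges unfolding two_factor_def by blast+
  obtain u v where uv: "u \<noteq> v" "u \<in> V" "v \<in> V" "e = {u, v}"
    using simple_graph_edgeE[OF assms(1)] assms(4) \<open>H \<subseteq> E\<close> by blast
  have card_N: "card (N w) = d - 2" if "w \<in> V" for w
    using card_non_factor_edges_at[OF assms(1-3) that] by (simp add: N_def)
  have "N u \<inter> N v = {}"
    using edges_at_both_endpoints[OF assms(1) \<open>u \<noteq> v\<close>] uv(4) assms(4) by (auto simp: N_def)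
  then have card_NN: "card (N u \<union> N v) = 2 * (d - 2)"
    using card_N uv \<open>finite E\<close> by (simp add: card_Un_disjoint N_def)
  have prob_event: "measure_pmf.prob ?p (event R)
                    = fact (card V - 1) * fact (card R) / fact (card V + card R)"
    if "R \<subseteq> E" "H \<inter> R = {}" for R
    using prob_last_of_before_all[OF \<open>finite E\<close> \<open>H \<subseteq> E\<close> that assms(4)] card_two_factor[OF assms(1,3)]
    by (simp add: event_def)
  have N_sub: "N w \<subseteq> E" "H \<inter> N w = {}" "N u \<union> N v \<subseteq> E" "H \<inter> (N u \<union> N v) = {}" for w
    by (auto simp: N_def)
  have "{xs. H - {e} \<subseteq> elems_before e xs \<and> (\<exists>u\<in>e. N u \<inter> elems_before e xs = {})}
        = event (N u) \<union> event (N v)"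
    by (auto simp: event_def uv(4))
  moreover have "event (N u) \<inter> event (N v) = event (N u \<union> N v)"
    by (auto simp: event_def)
  ultimately have "measure_pmf.prob ?p {xs. H - {e} \<subseteq> elems_before e xs \<and> (\<exists>u\<in>e. N u \<inter> elems_before e xs = {})}
        = measure_pmf.prob ?p (event (N u)) + measure_pmf.prob ?p (event (N v))
          - measure_pmf.prob ?p (event (N u \<union> N v))"
    by (simp add: measure_Un3 measure_pmf.fmeasurable_eq_sets)
  also have "\<dots> = 2 * (fact (card V - 1) * fact (d - 2) / fact (card V + (d - 2)))
           - fact (card V - 1) * fact (2 * (d - 2)) / fact (card V + 2 * (d - 2))"
    using uv card_N card_NN by (simp add: prob_event N_sub)
  finally show ?thesis
    by (simp add: N_def)
qed

lemma inverse_binomial_eq_fact: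
  assumes "n \<ge> 1"
  shows "real n * (fact (n - 1) * fact k / fact (n + k)) = 1 / real ((n + k) choose n)"
proof -
  have "real n * fact (n - 1) = (fact n :: real)"
    using assms fact_reduce[of n, where 'a = real] by simp
  then show ?thesis
    by (simp add: binomial_fact)
qed

lemma prob_two_factor_subset_G_omega:
  assumes "simple_graph V E" "regular V E d" "two_factor V E H" "V \<noteq> {}"
  shows "measure_pmf.prob (pmf_of_set (permutations_of_set E)) {xs. H \<subseteq> G_omega V xs}
         = 2 / real ((card V + d - 2) choose card V) - 1 / real ((card V + 2 * d - 4) choose card V)"
proof -
  let ?p = "pmf_of_set (permutations_of_set E)"
  define X where "X e = {xs. H - {e} \<subseteq> elems_before e xs \<and>
                              (\<exists>u\<in>e. {f \<in> E - H. u \<in> f} \<inter> elems_before e xs = {})}" for e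
  have "finite E" "finite V" "card H = card V"
    using simple_graph_finite_edges[OF assms(1)] assms(1) card_two_factor[OF assms(1,3)]
    by (simp_all add: simple_graph_def)
  then have "card V \<ge> 1"
    using assms(4) by (simp add: Suc_le_eq card_gt_0_iff)
  then have "finite H" "H \<noteq> {}"
    using \<open>card H = card V\<close> by (auto intro: card_ge_0_finite)
  have "measure_pmf.prob ?p {xs. H \<subseteq> G_omega V xs} = measure_pmf.prob ?p (\<Union>e\<in>H. X e)"
    using \<open>finite E\<close> subset_G_omega_iff_ex_last[OF assms(1,3) _ \<open>H \<noteq> {}\<close>]
    by (intro measure_pmf.finite_measure_eq_AE AE_pmfI) (auto simp: X_def)
  also have "\<dots> = (\<Sum>e\<in>H. measure_pmf.prob ?p (X e))"
    using \<open>finite H\<close> disjoint_family_on_last_occurring unfolding X_def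
    by (intro measure_pmf.finite_measure_finite_Union) auto
  also have "\<dots> = real (card V) * (2 * (fact (card V - 1) * fact (d - 2) / fact (card V + (d - 2)))
                  - fact (card V - 1) * fact (2 * (d - 2)) / fact (card V + 2 * (d - 2)))"
    using prob_last_edge_with_unsaturated_endpoint[OF assms(1-3)] \<open>card H = card V\<close> by (simp add: X_def)
  also have "\<dots> = 2 / real ((card V + d - 2) choose card V) - 1 / real ((card V + 2 * d - 4) choose card V)"
    using regular_degree_ge_2_if_two_factor[OF assms] \<open>card V \<ge> 1\<close>
      inverse_binomial_eq_fact[of "card V" "d - 2"] inverse_binomial_eq_fact[of "card V" "2 * (d - 2)"]
    by (simp only: right_diff_distrib mult.left_commute[of "real (card V)" 2]) (simp add: algebra_simps)
  finally show ?thesis .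
qed

lemma expectation_fraction_eq_common_prob:
  assumes "finite S" "S \<noteq> {}" "\<And>s. s \<in> S \<Longrightarrow> measure_pmf.prob p {x. Q s x} = r"
  shows "measure_pmf.expectation p (\<lambda>x. real (card {s \<in> S. Q s x}) / real (card S)) = r"
proof -
  have "real (card {s \<in> S. Q s x}) = (\<Sum>s\<in>S. indicator {x. Q s x} x)" for x
    using assms(1) by (simp add: indicator_def sum.If_cases Int_def)
  then have "measure_pmf.expectation p (\<lambda>x. real (card {s \<in> S. Q s x}) / real (card S))
             = (\<Sum>s\<in>S. measure_pmf.prob p {x. Q s x}) / real (card S)"
    by (simp add: Bochner_Integration.integral_sum measure_pmf.emeasure_finite less_top[symmetric])
  also have "\<dots> = r"
    using assms by simp
  finally show ?thesis .
qed

theorem corollary3: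
  fixes V :: "'a set" and E :: "'a set set" and n d :: nat
  assumes "simple_graph V E"
    and "card V = n" and "n \<ge> 3"
    and "regular V E d"
    and "ham_cycles V E \<noteq> {}"
  shows "measure_pmf.expectation (pmf_of_set (permutations_of_set E))
           (\<lambda>xs. real (card {H \<in> ham_cycles V E. H \<subseteq> G_omega V xs}) / real (card (ham_cycles V E)))
         = 2 / real ((n + d - 2) choose n) - 1 / real ((n + 2 * d - 4) choose n)"
proof (rule expectation_fraction_eq_common_prob)
  have "ham_cycles V E \<subseteq> Pow E"
    unfolding ham_cycles_def by blast
  then show "finite (ham_cycles V E)"
    using simple_graph_finite_edges[OF assms(1)] finite_subset by blast
  have "V \<noteq> {}"
    using assms(2,3) by auto
  then show "measure_pmf.prob (pmf_of_set (permutations_of_set E)) {xs. H \<subseteq> G_omega V xs}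
             = 2 / real ((n + d - 2) choose n) - 1 / real ((n + 2 * d - 4) choose n)"
    if "H \<in> ham_cycles V E" for H
    using prob_two_factor_subset_G_omega[OF assms(1,4) ham_cycle_two_factor[OF that]] assms(2) by simp
qed (fact assms(5))

end
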